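(* Let $G$, $k\ge 3$, the choice strings $c_{i,j}$, the template string $t$, $L$ and $d$ be as in the binary construction in the context, and let $s\in\{0,1\}^L$ be a solution, i.e. $t$ and every choice string $c_{i,j}$ ($1\le i<j\le k$) have a substring of length $L$ at Hamming distance at most $d$ from $s$. Then the encoding part of $s$ contains exactly $k$ symbols $1$.
   Context: Let $G=(V,E)$ be an undirected simple graph with $V=\{v_1,\dots,v_n\}$ and edge set $E=\{e_1,\dots,e_m\}$, and let $k\ge 3$ be an integer; put $N=\binom{k}{2}$ and $b=nk-2k+2$. All strings are over $\{0,1\}$. For $1\le p\le n$ let $\mathrm{number}(p)=0^{p-1}10^{n-p}$. Let $\mathrm{front\_tag}=(1^{3nk}0)^{nk}$ (length $(3nk+1)nk$). Order the pairs $(i,j)$, $1\le i<j\le k$, lexicographically and let $i'$ be the position of $(i,j)$ in this order. For an edge $e$ joining $v_r,v_s$ with $r<s$ let $\mathrm{encode}(i,j,e)=(0^n)^{i-1}\,\mathrm{number}(r)\,(0^n)^{j-i-1}\,\mathrm{number}(s)\,(0^n)^{k-j}$, $\mathrm{back\_tag}(i')=0^{(i'-1)b}1^{b}0^{(N-i')b}$, and $\mathrm{block}(i,j,e)=\mathrm{front\_tag}\,\mathrm{encode}(i,j,e)\,\mathrm{back\_tag}(i')$. The choice string is $c_{i,j}=\mathrm{block}(i,j,e_1)\cdots\mathrm{block}(i,j,e_m)$. The template string is $t=\mathrm{front\_tag}\,1^{nk}\,0^{Nb}$. Set $L=(3nk+1)nk+nk+Nb$ and $d=nk-k$. For a string $s$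 of length $L$, its encoding part is the substring of its positions $(3nk+1)nk+1,\dots,(3nk+1)nk+nk$. *)

theory Defs
  imports Main
begin

text \<open>Binary strings are lists of booleans: False = 0, True = 1.
  Positions are 1-based in the paper; lists are 0-based here.\<close>

definition zeros :: "nat \<Rightarrow> bool list" where "zeros l = replicate l False"
definition ones :: "nat \<Rightarrow> bool list" where "ones l = replicate l True"

definition number :: "nat \<Rightarrow> nat \<Rightarrow> bool list" where
  "number n p = zeros (p - 1) @ [True] @ zeros (n - p)"

definition front_tag :: "nat \<Rightarrow> nat \<Rightarrow> bool list" where
  "front_tag n k = concat (replicate (n*k) (ones (3*n*k) @ [False]))"

definition NN :: "nat \<Rightarrow> nat" where "NN k = k choose 2"

definition bb :: "nat \<Rightarrow> nat \<Rightarrow> nat" where "bb n k = n*k - 2*k + 2"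

definition pairs :: "nat \<Rightarrow> (nat \<times> nat) list" where
  "pairs k = concat (map (\<lambda>i. map (\<lambda>j. (i,j)) [i+1..<k+1]) [1..<k+1])"

definition pair_pos :: "nat \<Rightarrow> nat \<Rightarrow> nat \<Rightarrow> nat" where
  "pair_pos k i j = length (takeWhile (\<lambda>p. p \<noteq> (i,j)) (pairs k)) + 1"

text \<open>An edge is a pair (r,s) of vertex indices with r < s.\<close>
definition encode :: "nat \<Rightarrow> nat \<Rightarrow> nat \<Rightarrow> nat \<Rightarrow> nat \<times> nat \<Rightarrow> bool list" where
  "encode n k i j e = concat (replicate (i-1) (zeros n)) @ number n (fst e)
     @ concat (replicate (j-i-1) (zeros n)) @ number n (snd e)
     @ concat (replicate (k-j) (zeros n))"

definition back_tag :: "nat \<Rightarrow> nat \<Rightarrow> nat \<Rightarrow> bool list" where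
  "back_tag n k i' = zeros ((i'-1) * bb n k) @ ones (bb n k) @ zeros ((NN k - i') * bb n k)"

definition block :: "nat \<Rightarrow> nat \<Rightarrow> nat \<Rightarrow> nat \<Rightarrow> nat \<times> nat \<Rightarrow> bool list" where
  "block n k i j e = front_tag n k @ encode n k i j e @ back_tag n k (pair_pos k i j)"

definition choice_string :: "nat \<Rightarrow> (nat \<times> nat) list \<Rightarrow> nat \<Rightarrow> nat \<Rightarrow> nat \<Rightarrow> bool list" where
  "choice_string n E k i j = concat (map (block n k i j) E)"

definition template :: "nat \<Rightarrow> nat \<Rightarrow> bool list" where
  "template n k = front_tag n k @ ones (n*k) @ zeros (NN k * bb n k)"

definition LL :: "nat \<Rightarrow> nat \<Rightarrow> nat" where
  "LL n k = (3*n*k+1)*n*k + n*k + NN k * bb n k"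

definition dd :: "nat \<Rightarrow> nat \<Rightarrow> nat" where "dd n k = n*k - k"

definition hamming :: "bool list \<Rightarrow> bool list \<Rightarrow> nat" where
  "hamming x y = length (filter (\<lambda>(a,b). a \<noteq> b) (zip x y))"

definition close_substring :: "bool list \<Rightarrow> nat \<Rightarrow> bool list \<Rightarrow> bool" where
  "close_substring c d s = (\<exists>p. p + length s \<le> length c \<and>
       hamming (take (length s) (drop p c)) s \<le> d)"

definition encoding_part :: "nat \<Rightarrow> nat \<Rightarrow> bool list \<Rightarrow> bool list" where
  "encoding_part n k s = take (n*k) (drop ((3*n*k+1)*n*k) s)"

end

theory Submission
  imports Defs
begin

text \<open>
  Let \<open>x\<close> be the number of ones in the encoding part of \<open>s\<close> and \<open>d = nk - k\<close>. The template
  has the length of \<open>s\<close>, so the errors of \<open>s\<close> on the front tag, the zeros of its encoding part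
  and the ones of its back part number at most \<open>d\<close> together: \<open>x \<ge> k\<close>, and the back part of \<open>s\<close>
  has at most \<open>x - k\<close> ones.

  The front tag has period \<open>3nk + 1\<close> with one zero per period. A window of a choice string
  that is not aligned with its blocks compares the front tag either with a shift of itself
  by less than a period, which disagrees twice per period, or with a long stretch of the
  sparse remainder of a block. Either way it is more than \<open>2d\<close> away from the front tag,
  contradicting the triangle inequality through \<open>s\<close>. So every choice string matches \<open>s\<close>
  with a whole block; as the block has two ones in its encoding part and only ones in the
  slot of \<open>(i, j)\<close> of its back tag, \<open>s\<close> has at least \<open>x - k\<close> ones in that slot. The slots of
  \<open>(1, 2)\<close> and \<open>(1, 3)\<close> are disjoint, so \<open>2 (x - k) \<le> x - k\<close>, i.e. \<open>x = k\<close>.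
\<close>

section \<open>Hamming distance and counting\<close>

lemma hamming_append:
  "length x1 = length y1 \<Longrightarrow> hamming (x1 @ x2) (y1 @ y2) = hamming x1 y1 + hamming x2 y2"
  by (simp add: hamming_def)

lemma hamming_commute: "hamming x y = hamming y x"
proof (induction x arbitrary: y)
  case (Cons a x)
  then show ?case by (cases y) (auto simp: hamming_def)
qed (simp add: hamming_def)

lemma hamming_take_drop: "hamming x y = hamming (take j x) (take j y) + hamming (drop j x) (drop j y)"
  unfolding hamming_def by (metis append_take_drop_id drop_zip filter_append length_append take_zip)

lemma hamming_slice_le: "hamming (take l (drop a x)) (take l (drop a y)) \<le> hamming x y"
  using hamming_take_drop[of x y a] hamming_take_drop[of "drop a x" "drop a y" l] by linarith

lemma hamming_triangle:
  "length x = length y \<Longrightarrow> length y = length z \<Longrightarrow> hamming x z \<le> hamming x y + hamming y z"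
  by (induction x y z rule: list_induct3) (auto simp: hamming_def)

lemma hamming_conv_card:
  "length x = length y \<Longrightarrow> hamming x y = card {i. i < length x \<and> x ! i \<noteq> y ! i}"
  unfolding hamming_def by (auto simp: length_filter_conv_card intro!: arg_cong[where f = card])

lemma hamming_replicate: "hamming (replicate (length y) a) y = count_list y (\<not> a)"
  by (induction y) (auto simp: hamming_def)

lemma count_list_True_False: "count_list xs True + count_list xs False = length xs"
  by (induction xs) auto

lemma count_list_replicate_same: "count_list (replicate l x) x = l"
  by (induction l) auto

lemma count_list_take_drop: "count_list xs x = count_list (take j xs) x + count_list (drop j xs) x"
  by (metis append_take_drop_id count_list_append)

lemma count_list_slice_le: "count_list (take l (drop a xs)) x \<le> count_list xs x"
  using count_list_take_drop[of xs x a] count_list_take_drop[of "drop a xs" x l] by linarith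

lemma count_list_le_hamming:
  "length x = length y \<Longrightarrow> count_list y a \<le> count_list x a + hamming x y"
  by (induction x y rule: list_induct2) (auto simp: hamming_def)

lemma count_list_disjoint_slices_le:
  assumes "u \<noteq> v"
  shows "count_list (take l (drop (u*l) xs)) x + count_list (take l (drop (v*l) xs)) x \<le> count_list xs x"
proof -
  have ordered: "count_list (take l (drop (u*l) xs)) x + count_list (take l (drop (v*l) xs)) x \<le> count_list xs x"
    if "u < v" for u v
  proof -
    have "(v - Suc u) * l + (l + u * l) = v * l"
      using that add_mult_distrib[of "v - Suc u" "Suc u" l] by simp
    then have "take l (drop (v*l) xs) = take l (drop ((v - Suc u) * l) (drop l (drop (u*l) xs)))"
      by (simp only: drop_drop)
    then have "count_list (take l (drop (v*l) xs)) x \<le> count_list (drop l (drop (u*l) xs)) x"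
      by (simp only: count_list_slice_le)
    then show ?thesis
      using count_list_take_drop[of xs x "u*l"] count_list_take_drop[of "drop (u*l) xs" x l] by linarith
  qed
  show ?thesis
    using assms ordered[of u v] ordered[of v u] by (cases "u < v") simp_all
qed

section \<open>Periodic patterns\<close>

lemma card_residue_interval_le:
  assumes "0 < P"
  shows "card {i \<in> {a..<a+l}. i mod P = c} \<le> l div P + 1"
proof -
  let ?S = "{i \<in> {a..<a+l}. i mod P = c}"
  let ?f = "\<lambda>i. (i - a) div P"
  have "?f i < ?f j" if "i \<in> ?S" "j \<in> ?S" "i < j" for i j
  proof -
    have "P dvd j - i" using that mod_eq_dvd_iff_nat[of i j P] by simp
    then have "P \<le> j - i" using \<open>i < j\<close> by (simp add: dvd_imp_le)
    then have "(i - a) + P \<le> j - a" using that by auto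
    then have "((i - a) + P) div P \<le> ?f j" by (rule div_le_mono)
    moreover have "((i - a) + P) div P = ?f i + 1" using assms div_add_self2[of P "i - a"] by simp
    ultimately show ?thesis by simp
  qed
  then have "inj_on ?f ?S" by (intro linorder_inj_onI') (simp add: less_imp_neq)
  moreover have "?f ` ?S \<subseteq> {..l div P}"
    by (auto intro!: div_le_mono)
  ultimately show ?thesis using card_inj_on_le[of ?f ?S "{..l div P}"] by simp
qed

lemma card_residue_lessThan_ge:
  assumes "c < P"
  shows "l div P \<le> card {i. i < l \<and> i mod P = c}"
proof -
  have "inj_on (\<lambda>t. t * P + c) {..<l div P}" using assms by (auto simp: inj_on_def)
  moreover have "(\<lambda>t. t * P + c) ` {..<l div P} \<subseteq> {i. i < l \<and> i mod P = c}"
  proof clarify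
    fix t assume "t < l div P"
    then have "Suc t * P \<le> l div P * P" by (intro mult_le_mono1) simp
    also have "\<dots> \<le> l" by simp
    finally show "t * P + c < l \<and> (t * P + c) mod P = c" using assms by simp
  qed
  ultimately show ?thesis using card_inj_on_le[of _ "{..<l div P}"] by fastforce
qed

lemma hamming_periodic_shift:
  assumes "c < P" "0 < \<delta>" "\<delta> < P"
  shows "2 * (l div P) \<le>
    hamming (map (\<lambda>i. i mod P \<noteq> c) [\<delta>..<\<delta>+l]) (map (\<lambda>i. i mod P \<noteq> c) [0..<l])"
proof -
  \<comment> \<open>\<open>e\<close> is the residue of \<open>c - \<delta>\<close>: where the shifted pattern has its zeros.\<close>
  define e where "e = (c + (P - \<delta>)) mod P"
  have "e < P" using assms by (simp add: e_def)
  have e_shift: "(\<delta> + i) mod P = c" if "i mod P = e" for i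
  proof -
    have "(\<delta> + i) mod P = (\<delta> + e) mod P" using that mod_add_right_eq[of \<delta> i P] by simp
    also have "\<dots> = (c + P) mod P" using assms by (simp add: e_def mod_add_right_eq)
    finally show ?thesis using assms by simp
  qed
  have exclusive: "(\<delta> + i) mod P \<noteq> i mod P" for i
  proof
    assume "(\<delta> + i) mod P = i mod P"
    then have "P dvd \<delta>" using mod_eq_dvd_iff_nat[of i "\<delta> + i" P] by simp
    then show False using assms by (auto dest: dvd_imp_le)
  qed
  let ?A = "{i. i < l \<and> i mod P = c}" and ?B = "{i. i < l \<and> i mod P = e}"
  have "2 * (l div P) \<le> card ?A + card ?B"
    using card_residue_lessThan_ge[OF assms(1), of l] card_residue_lessThan_ge[OF \<open>e < P\<close>, of l] by linarith
  also have "\<dots> = card (?A \<union> ?B)"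
  proof (rule card_Un_disjoint[symmetric])
    show "?A \<inter> ?B = {}" using e_shift exclusive by force
  qed simp_all
  also have "\<dots> \<le> card {i. i < l \<and> ((\<delta> + i) mod P \<noteq> c) \<noteq> (i mod P \<noteq> c)}"
  proof (rule card_mono)
    show "?A \<union> ?B \<subseteq> {i. i < l \<and> ((\<delta> + i) mod P \<noteq> c) \<noteq> (i mod P \<noteq> c)}"
    proof
      fix i assume "i \<in> ?A \<union> ?B"
      then show "i \<in> {i. i < l \<and> ((\<delta> + i) mod P \<noteq> c) \<noteq> (i mod P \<noteq> c)}"
        using e_shift[of i] exclusive[of i] by auto
    qed
  qed simp
  also have "\<dots> = hamming (map (\<lambda>i. i mod P \<noteq> c) [\<delta>..<\<delta>+l]) (map (\<lambda>i. i mod P \<noteq> c) [0..<l])"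
    by (simp add: hamming_conv_card add.commute cong: conj_cong)
  finally show ?thesis .
qed

lemma count_list_periodic_True_ge:
  assumes "0 < P"
  shows "l - (l div P + 1) \<le> count_list (map (\<lambda>i. i mod P \<noteq> c) [a..<a+l]) True"
proof -
  let ?xs = "map (\<lambda>i. i mod P \<noteq> c) [a..<a+l]"
  have "count_list ?xs False = card {i \<in> {a..<a+l}. i mod P = c}"
  proof -
    have "{i. i mod P = c} \<inter> set [a..<a+l] = {i \<in> {a..<a+l}. i mod P = c}" by auto
    then show ?thesis
      by (simp add: count_list_eq_length_filter filter_map comp_def distinct_length_filter)
  qed
  then have "count_list ?xs False \<le> l div P + 1" using card_residue_interval_le[OF assms] by simp
  then show ?thesis using count_list_True_False[of ?xs] by simp
qed

lemma hamming_window_slice_le: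
  "a + l \<le> m \<Longrightarrow> hamming (take l (drop (q + a) S)) (take l (drop a F)) \<le> hamming (take m (drop q S)) F"
  using hamming_slice_le[of l a "take m (drop q S)" F] by (simp add: drop_take add.commute)

lemma hamming_sparse_window:
  fixes P c m :: nat and r T :: "bool list"
  defines "F \<equiv> map (\<lambda>i. i mod P \<noteq> c) [0..<m*P]"
  assumes "0 < P" "a + l \<le> m*P" "m*P \<le> q + a" "q + a + l \<le> m*P + length r"
  shows "l - (l div P + 1) - count_list r True \<le> hamming (take (m*P) (drop q (F @ r @ T))) F"
proof -
  let ?w = "take l (drop (q + a) (F @ r @ T))"
  have lenF: "length F = m*P" by (simp add: F_def)
  have "?w = take l (drop (q + a - m*P) r)" using assms(3-5) by (simp add: lenF)
  then have "count_list ?w True \<le> count_list r True" by (simp add: count_list_slice_le)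
  moreover have "take l (drop a F) = map (\<lambda>i. i mod P \<noteq> c) [a..<a+l]"
    using assms(3) by (simp add: F_def drop_map take_map)
  then have "l - (l div P + 1) \<le> count_list (take l (drop a F)) True"
    using count_list_periodic_True_ge[OF \<open>0 < P\<close>] by simp
  moreover have "count_list (take l (drop a F)) True \<le> count_list ?w True + hamming ?w (take l (drop a F))"
    using assms(3-5) lenF by (intro count_list_le_hamming) simp
  ultimately show ?thesis using hamming_window_slice_le[OF assms(3), of q "F @ r @ T" F] by linarith
qed

lemma hamming_misaligned_window:
  fixes P c m R q h :: nat and r1 r2 :: "bool list"
  defines "F \<equiv> map (\<lambda>i. i mod P \<noteq> c) [0..<m*P]"
  assumes "c < P" "length r1 = R" "0 < q" "q < m*P + R"
    and shift_bound: "h \<le> 2*(m-1)"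
    and period_bound: "h + count_list r1 True + 2 \<le> P"
    and rest_bound: "h + count_list r1 True + R div P + 1 \<le> R"
  shows "h \<le> hamming (take (m*P) (drop q (F @ r1 @ F @ r2))) F"
proof (cases "m \<le> 1")
  case True
  then show ?thesis using shift_bound by simp
next
  case False
  define f where "f = (\<lambda>i. i mod P \<noteq> c)"
  define W where "W = take (m*P) (drop q (F @ r1 @ F @ r2))"
  have P: "0 < P" "m*P = (m-1)*P + P" using \<open>c < P\<close> False by (auto simp: mult_eq_if)
  have lenF: "length F = m*P" by (simp add: F_def)
  have F_slice: "take ((m-1)*P) (drop a F) = map f [a..<a+(m-1)*P]" if "a \<le> P" for a
    using that P by (simp add: F_def f_def drop_map take_map)
  have sparse: "h \<le> hamming W F"
    if "a + l \<le> m*P" "m*P \<le> q + a" "q + a + l \<le> m*P + R" "h + count_list r1 True + l div P + 1 \<le> l" for a l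
    using hamming_sparse_window[OF P(1) that(1,2) that(3)[folded \<open>length r1 = R\<close>],
        where T = "F @ r2" and c = c, folded F_def W_def] that(4)
    by linarith
  have shift: "h \<le> hamming W F"
    if "0 < \<delta>" "\<delta> < P" "hamming (map f [\<delta>..<\<delta>+(m-1)*P]) (map f [0..<(m-1)*P]) \<le> hamming W F"
    for \<delta>
    using hamming_periodic_shift[OF \<open>c < P\<close> that(1,2), of "(m-1)*P"] that(3) shift_bound P(1)
    by (simp add: f_def)
  \<comment> \<open>Unless \<open>q\<close> or \<open>m*P + R - q\<close> is less than a period, the front of the window
    contains \<open>P\<close> or \<open>R\<close> consecutive positions of \<open>r1\<close>, which has few ones.\<close>
  consider "q < P" | "m*P + R - q < P" | "P \<le> q" "q \<le> R" | "R < q" "q \<le> m*P"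
    | "m*P < q" "q + P \<le> m*P + R"
    using \<open>q < m*P + R\<close> by linarith
  then have "h \<le> hamming W F"
  proof cases
    case 1
    have "hamming (take ((m-1)*P) (drop (q + 0) (F @ r1 @ F @ r2))) (take ((m-1)*P) (drop 0 F))
        \<le> hamming W F"
      unfolding W_def using P by (intro hamming_window_slice_le) simp
    moreover have "take ((m-1)*P) (drop (q + 0) (F @ r1 @ F @ r2)) = map f [q..<q+(m-1)*P]"
      using 1 P F_slice[of q] by (simp add: lenF)
    ultimately show ?thesis using 1 \<open>0 < q\<close> F_slice[of 0] by (intro shift[of q]) simp_all
  next
    case 2
    define \<delta> where "\<delta> = m*P + R - q"
    have "q + \<delta> = length (F @ r1)" using \<open>q < m*P + R\<close> \<open>length r1 = R\<close> by (simp add: \<delta>_def lenF)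
    then have "take ((m-1)*P) (drop (q + \<delta>) (F @ r1 @ F @ r2)) = map f [0..<(m-1)*P]"
      using P lenF F_slice[of 0] by simp
    moreover have "hamming (take ((m-1)*P) (drop (q + \<delta>) (F @ r1 @ F @ r2))) (take ((m-1)*P) (drop \<delta> F))
        \<le> hamming W F"
      unfolding W_def using 2 P by (intro hamming_window_slice_le) (simp add: \<delta>_def)
    moreover have "0 < \<delta>" "\<delta> < P" using 2 \<open>q < m*P + R\<close> by (simp_all add: \<delta>_def)
    ultimately show ?thesis
      using F_slice[of \<delta>] by (intro shift[of \<delta>]) (simp_all add: hamming_commute)
  next
    case 3
    then show ?thesis using P period_bound by (intro sparse[of "m*P - P" P]) simp_all
  next
    case 4
    then show ?thesis using rest_bound by (intro sparse[of "m*P - q" R]) simp_all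
  next
    case 5
    then show ?thesis using P period_bound by (intro sparse[of 0 P]) simp_all
  qed
  then show ?thesis by (simp add: W_def)
qed

section \<open>Windows of concatenations\<close>

lemma drop_concat_map_uniform:
  assumes "\<forall>x\<in>set xs. length (f x) = L"
  shows "drop (a*L) (concat (map f xs)) = concat (map f (drop a xs))"
  using assms
proof (induction xs arbitrary: a)
  case (Cons x xs)
  then show ?case by (cases a) (simp_all add: add.commute)
qed simp

lemma length_concat_map_uniform:
  "\<forall>x\<in>set xs. length (f x) = L \<Longrightarrow> length (concat (map f xs)) = length xs * L"
  by (induction xs) auto

lemma window_of_concat:
  assumes lens: "\<forall>x\<in>set xs. length (f x) = L" and "0 < L" and p: "p + L \<le> length xs * L"
  obtains x where "x \<in> set xs" "take L (drop p (concat (map f xs))) = f x"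
  | x y q where "x \<in> set xs" "y \<in> set xs" "0 < q" "q < L"
      "take L (drop p (concat (map f xs))) = take L (drop q (f x @ f y))"
proof -
  define a where "a = p div L"
  define q where "q = p mod L"
  have pa: "p = a*L + q" by (simp add: a_def q_def)
  have "q < L" using \<open>0 < L\<close> by (simp add: q_def)
  have "Suc a * L + q \<le> length xs * L" using p pa by simp
  then have "Suc a * L \<le> length xs * L" by linarith
  then have "a < length xs" using \<open>0 < L\<close> by (simp only: mult_le_cancel2) simp
  have window: "take L (drop p (concat (map f xs))) = take L (drop q (concat (map f (drop a xs))))"
  proof -
    have "drop p (concat (map f xs)) = drop q (drop (a*L) (concat (map f xs)))"
      by (simp add: pa add.commute)
    then show ?thesis using drop_concat_map_uniform[OF lens, of a] by simp
  qed
  show thesis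
  proof (cases "q = 0")
    case True
    then show thesis
      using that(1)[of "xs ! a"] window \<open>a < length xs\<close> lens
      by (simp add: Cons_nth_drop_Suc[symmetric])
  next
    case False
    then have "Suc a * L < length xs * L" using \<open>Suc a * L + q \<le> length xs * L\<close> by linarith
    then have "Suc a < length xs" by (simp only: mult_less_cancel2)
    then have "drop a xs = xs ! a # xs ! Suc a # drop (Suc (Suc a)) xs"
      by (simp add: Cons_nth_drop_Suc)
    then have "take L (drop q (concat (map f (drop a xs)))) = take L (drop q (f (xs ! a) @ f (xs ! Suc a)))"
      using \<open>q < L\<close> \<open>Suc a < length xs\<close> lens by simp
    then show thesis
      using that(2)[of "xs ! a" "xs ! Suc a" q] window False \<open>q < L\<close> \<open>Suc a < length xs\<close> by simp
  qed
qed

section \<open>The strings of the construction\<close>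

lemma concat_replicate_nth:
  "i < m * length xs \<Longrightarrow> concat (replicate m xs) ! i = xs ! (i mod length xs)"
proof (induction m arbitrary: i)
  case (Suc m)
  then show ?case
    by (cases "i < length xs") (simp_all add: nth_append le_mod_geq)
qed simp

lemma front_tag_conv_map:
  "front_tag n k = map (\<lambda>i. i mod (3*n*k+1) \<noteq> 3*n*k) [0..<n*k*(3*n*k+1)]"
proof (rule nth_equalityI)
  show "length (front_tag n k) = length (map (\<lambda>i. i mod (3*n*k+1) \<noteq> 3*n*k) [0..<n*k*(3*n*k+1)])"
    by (simp add: front_tag_def ones_def length_concat sum_list_replicate)
  fix i assume "i < length (front_tag n k)"
  then have "i < n*k * length (ones (3*n*k) @ [False])"
    by (simp add: front_tag_def ones_def length_concat sum_list_replicate)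
  moreover have "i mod (3*n*k+1) < 3*n*k+1" by simp
  ultimately show "front_tag n k ! i = map (\<lambda>i. i mod (3*n*k+1) \<noteq> 3*n*k) [0..<n*k*(3*n*k+1)] ! i"
    unfolding front_tag_def by (auto simp: concat_replicate_nth nth_append ones_def less_Suc_eq)
qed

lemma length_front_tag: "length (front_tag n k) = (3*n*k+1)*n*k"
  by (simp add: front_tag_conv_map algebra_simps)

lemma length_encode:
  assumes "1 \<le> i" "i < j" "j \<le> k" "1 \<le> r" "r < v" "v \<le> n"
  shows "length (encode n k i j (r, v)) = n*k"
proof -
  have "length (encode n k i j (r, v)) = (i-1)*n + n + (j-i-1)*n + n + (k-j)*n"
    using assms by (simp add: encode_def number_def zeros_def length_concat sum_list_replicate)
  also have "\<dots> = ((i-1) + 1 + (j-i-1) + 1 + (k-j)) * n" by (simp only: add_mult_distrib mult_1)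
  also have "(i-1) + 1 + (j-i-1) + 1 + (k-j) = k" using assms by simp
  finally show ?thesis by simp
qed

lemma count_encode: "count_list (encode n k i j e) True = 2"
proof -
  have "count_list (concat (replicate l (zeros n))) True = 0" for l
    by (induction l) (simp_all add: zeros_def)
  then show ?thesis by (simp add: encode_def number_def zeros_def)
qed

lemma length_back_tag:
  assumes "1 \<le> u" "u \<le> NN k"
  shows "length (back_tag n k u) = NN k * bb n k"
proof -
  have "length (back_tag n k u) = ((u-1) + 1 + (NN k - u)) * bb n k"
    by (simp add: back_tag_def zeros_def ones_def algebra_simps)
  also have "(u-1) + 1 + (NN k - u) = NN k" using assms by simp
  finally show ?thesis .
qed

lemma count_back_tag: "count_list (back_tag n k u) True = bb n k"
  by (simp add: back_tag_def zeros_def ones_def count_list_replicate_same)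

lemma back_tag_slot: "take (bb n k) (drop ((u-1) * bb n k) (back_tag n k u)) = ones (bb n k)"
  by (simp add: back_tag_def zeros_def ones_def)

lemma sum_diff_eq_choose_two: "(\<Sum>i=1..k. k - i) = k choose 2"
proof (induction k)
  case (Suc k)
  have "(\<Sum>i=1..Suc k. Suc k - i) = (\<Sum>i=1..k. (k - i) + 1)"
    by (simp add: Suc_diff_le)
  also have "\<dots> = (\<Sum>i=1..k. k - i) + (\<Sum>i=1..k. 1)" by (rule sum.distrib)
  also have "\<dots> = (k choose 2) + k" using Suc by simp
  finally show ?case by (simp add: numeral_2_eq_2)
qed simp

lemma length_pairs: "length (pairs k) = NN k"
proof -
  have "length (pairs k) = (\<Sum>i\<leftarrow>[1..<k+1]. k - i)"
    by (simp add: pairs_def length_concat comp_def del: upt_Suc)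
  also have "\<dots> = (\<Sum>i=1..k. k - i)"
    by (simp add: sum_set_upt_conv_sum_list_nat[symmetric] atLeastLessThanSuc_atLeastAtMost del: upt_Suc)
  finally show ?thesis using sum_diff_eq_choose_two[of k] by (simp add: NN_def)
qed

lemma length_takeWhile_less: "x \<in> set xs \<Longrightarrow> \<not> P x \<Longrightarrow> length (takeWhile P xs) < length xs"
  by (induction xs) auto

lemma pair_pos_less:
  assumes "1 \<le> i" "i < j" "j \<le> k"
  shows "pair_pos k i j - 1 < NN k"
proof -
  have "(i, j) \<in> set (pairs k)"
    using assms unfolding pairs_def by (auto simp del: upt_Suc intro!: bexI[where x = i])
  then show ?thesis
    using length_takeWhile_less[of "(i, j)" "pairs k" "\<lambda>p. p \<noteq> (i, j)"] by (simp add: pair_pos_def length_pairs)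
qed

lemma nth_pairs_pair_pos:
  assumes "1 \<le> i" "i < j" "j \<le> k"
  shows "pairs k ! (pair_pos k i j - 1) = (i, j)"
  using nth_length_takeWhile[of "\<lambda>p. p \<noteq> (i, j)" "pairs k"] pair_pos_less[OF assms]
  by (simp add: pair_pos_def length_pairs)

lemma length_block:
  assumes "1 \<le> i" "i < j" "j \<le> k" "1 \<le> r" "r < v" "v \<le> n"
  shows "length (block n k i j (r, v)) = LL n k"
  using assms pair_pos_less[OF assms(1-3)]
  by (simp add: block_def LL_def length_front_tag length_encode length_back_tag pair_pos_def)

lemma NN_ge_3: "3 \<le> k \<Longrightarrow> 3 \<le> NN k"
proof -
  assume "3 \<le> k"
  then have "3 * 2 \<le> k * (k - 1)" by (intro mult_le_mono) auto
  then show ?thesis by (simp add: NN_def choose_two)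
qed

definition front_part :: "nat \<Rightarrow> nat \<Rightarrow> bool list \<Rightarrow> bool list" where
  "front_part n k s = take ((3*n*k+1)*n*k) s"

definition back_part :: "nat \<Rightarrow> nat \<Rightarrow> bool list \<Rightarrow> bool list" where
  "back_part n k s = drop ((3*n*k+1)*n*k + n*k) s"

text \<open>The positions of \<open>s\<close> facing the block of ones of \<open>back_tag n k u\<close>.\<close>

definition back_slot :: "nat \<Rightarrow> nat \<Rightarrow> nat \<Rightarrow> bool list \<Rightarrow> bool list" where
  "back_slot n k u s = take (bb n k) (drop ((u-1) * bb n k) (back_part n k s))"

lemma hamming_parts:
  assumes "length s = LL n k" "length x = (3*n*k+1)*n*k" "length y = n*k"
  shows "hamming (x @ y @ z) s =
    hamming x (front_part n k s) + hamming y (encoding_part n k s) + hamming z (back_part n k s)"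
proof -
  have "s = take a s @ take b (drop a s) @ drop b (drop a s)" for a b
    by (simp only: append_take_drop_id)
  then have "s = front_part n k s @ encoding_part n k s @ back_part n k s"
    unfolding front_part_def encoding_part_def back_part_def by (metis drop_drop add.commute)
  then have "hamming (x @ y @ z) s =
      hamming (x @ y @ z) (front_part n k s @ encoding_part n k s @ back_part n k s)"
    by simp
  also have "\<dots> = hamming x (front_part n k s) + hamming y (encoding_part n k s) + hamming z (back_part n k s)"
    using assms by (simp add: hamming_append front_part_def encoding_part_def LL_def)
  finally show ?thesis .
qed

lemma template_distance:
  assumes "length s = LL n k" "close_substring (template n k) (dd n k) s"
  shows "hamming (front_tag n k) (front_part n k s) + count_list (encoding_part n k s) False
    + count_list (back_part n k s) True \<le> dd n k"
proof -
  have "length (template n k) = LL n k"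
    by (simp add: template_def LL_def length_front_tag ones_def zeros_def)
  then have "hamming (template n k) s \<le> dd n k"
    using assms unfolding close_substring_def by auto
  moreover have "length (encoding_part n k s) = n*k" "length (back_part n k s) = NN k * bb n k"
    using assms(1) by (simp_all add: encoding_part_def back_part_def LL_def)
  ultimately show ?thesis
    using assms(1) hamming_replicate[of "encoding_part n k s" True] hamming_replicate[of "back_part n k s" False]
    by (simp add: template_def hamming_parts length_front_tag ones_def zeros_def)
qed

lemma misaligned_rest_bound:
  assumes "3 \<le> k" "2 \<le> n"
  shows "2 * dd n k + 1 + (2 + bb n k) + (n*k + NN k * bb n k) div (3*n*k+1) + 1 \<le> n*k + NN k * bb n k"
proof -
  define M N b where "M = n*k" and "N = NN k" and "b = bb n k"
  define X where "X = (M + N*b) div (3*M+1)"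
  have "2*k \<le> M" using mult_le_mono1[OF assms(2), of k] by (simp add: M_def)
  then have b: "b = M + 2 - 2*k" unfolding b_def bb_def M_def[symmetric] by linarith
  have "3*b \<le> N*b" using NN_ge_3[OF assms(1)] by (simp add: N_def)
  have "X * (3*M+1) \<le> M + N*b" unfolding X_def by (rule div_times_less_eq_dividend)
  then have X: "3*M*X + X \<le> M + N*b" by (simp add: algebra_simps)
  have "2 * (M - k) + 1 + (2 + b) + X + 1 \<le> M + N*b"
  proof (cases "X = 0")
    case True
    then show ?thesis using \<open>2*k \<le> M\<close> \<open>3*b \<le> N*b\<close> b assms(1) by linarith
  next
    case False
    then have "3*M \<le> 3*M*X" by simp
    then show ?thesis using X \<open>2*k \<le> M\<close> b assms(1) by linarith
  qed
  then show ?thesis by (simp add: M_def N_def b_def X_def dd_def mult.assoc)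
qed

lemma misaligned_block_window:
  assumes "3 \<le> k" "1 \<le> i" "i < j" "j \<le> k" "1 \<le> r" "r < v" "v \<le> n" "0 < q" "q < LL n k"
  shows "2 * dd n k + 1 \<le>
    hamming (take ((3*n*k+1)*n*k) (drop q (block n k i j (r, v) @ block n k i j y))) (front_tag n k)"
proof -
  define R where "R = n*k + NN k * bb n k"
  define rest where "rest e = encode n k i j e @ back_tag n k (pair_pos k i j)" for e
  have "2 \<le> n" using assms by simp
  then have "2*k \<le> n*k" using mult_le_mono1 by blast
  have rest: "length (rest (r, v)) = R" "count_list (rest (r, v)) True = 2 + bb n k"
    using assms pair_pos_less[OF assms(2-4)]
    by (simp_all add: rest_def R_def length_encode length_back_tag count_encode count_back_tag pair_pos_def)
  have "2 * dd n k + 1 \<le> 2 * (n*k - 1)" "2 * dd n k + 1 + (2 + bb n k) + 2 \<le> 3*n*k+1"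
    unfolding dd_def bb_def using \<open>3 \<le> k\<close> \<open>2*k \<le> n*k\<close> by linarith+
  moreover have "2 * dd n k + 1 + (2 + bb n k) + R div (3*n*k+1) + 1 \<le> R"
    unfolding R_def by (rule misaligned_rest_bound[OF \<open>3 \<le> k\<close> \<open>2 \<le> n\<close>])
  moreover have "LL n k = n*k*(3*n*k+1) + R" by (simp add: R_def LL_def algebra_simps)
  ultimately have "2 * dd n k + 1 \<le> hamming (take (n*k*(3*n*k+1))
      (drop q (front_tag n k @ rest (r, v) @ front_tag n k @ rest y))) (front_tag n k)"
    unfolding front_tag_conv_map using assms(8,9) rest
    by (intro hamming_misaligned_window) simp_all
  then show ?thesis by (simp add: block_def rest_def algebra_simps)
qed

lemma choice_window_is_block:
  assumes edges: "\<forall>(r, v) \<in> set E. 1 \<le> r \<and> r < v \<and> v \<le> n"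
    and "3 \<le> k" and ij: "1 \<le> i" "i < j" "j \<le> k" and len: "length s = LL n k"
    and front: "hamming (front_tag n k) (front_part n k s) \<le> dd n k"
    and choice: "close_substring (choice_string n E k i j) (dd n k) s"
  obtains r v where "(r, v) \<in> set E" "hamming (block n k i j (r, v)) s \<le> dd n k"
proof -
  define L where "L = LL n k"
  have blocks: "\<forall>e\<in>set E. length (block n k i j e) = L"
    using edges ij by (auto simp: L_def length_block)
  have "0 < L" using NN_ge_3[OF \<open>3 \<le> k\<close>] by (simp add: L_def LL_def bb_def)
  obtain p where p: "p + L \<le> length E * L"
    and close: "hamming (take L (drop p (concat (map (block n k i j) E)))) s \<le> dd n k"
    using choice len length_concat_map_uniform[OF blocks]
    by (auto simp: close_substring_def choice_string_def L_def)
  show thesis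
    using blocks \<open>0 < L\<close> p
  proof (rule window_of_concat)
    fix e assume "e \<in> set E" "take L (drop p (concat (map (block n k i j) E))) = block n k i j e"
    then show thesis using that[of "fst e" "snd e"] close by simp
  next
    fix x y q assume "x \<in> set E" and q: "0 < q" "q < L"
      and window: "take L (drop p (concat (map (block n k i j) E))) = take L (drop q (block n k i j x @ block n k i j y))"
    define W where "W = take L (drop p (concat (map (block n k i j) E)))"
    define Fl where "Fl = (3*n*k+1)*n*k"
    have "Fl \<le> L" by (simp add: Fl_def L_def LL_def)
    have "length W = L" using p length_concat_map_uniform[OF blocks] by (simp add: W_def)
    obtain r v where "x = (r, v)" "1 \<le> r" "r < v" "v \<le> n" using \<open>x \<in> set E\<close> edges by auto
    then have "2 * dd n k + 1 \<le> hamming (take Fl (drop q (block n k i j x @ block n k i j y))) (front_tag n k)"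
      using misaligned_block_window \<open>3 \<le> k\<close> ij q by (simp add: Fl_def L_def)
    also have "take Fl (drop q (block n k i j x @ block n k i j y)) = take Fl W"
      by (simp only: W_def window take_take min_absorb1[OF \<open>Fl \<le> L\<close>])
    also have "hamming (take Fl W) (front_tag n k) \<le>
        hamming (take Fl W) (take Fl s) + hamming (take Fl s) (front_tag n k)"
      using \<open>length W = L\<close> len \<open>Fl \<le> L\<close>
      by (intro hamming_triangle) (simp_all add: Fl_def L_def length_front_tag)
    also have "\<dots> \<le> 2 * dd n k"
      using hamming_slice_le[of Fl 0 W s] close front hamming_commute[of "take Fl s"]
      by (simp add: W_def front_part_def Fl_def)
    finally show thesis by simp
  qed
qed

lemma back_slot_count:
  assumes "1 \<le> i" "i < j" "j \<le> k" "1 \<le> r" "r < v" "v \<le> n" and len: "length s = LL n k"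
    and close: "hamming (block n k i j (r, v)) s \<le> dd n k"
  shows "count_list (encoding_part n k s) True \<le> count_list (back_slot n k (pair_pos k i j) s) True + k"
proof -
  define u where "u = pair_pos k i j"
  define b where "b = bb n k"
  have "1 \<le> u" "u \<le> NN k" using pair_pos_less[OF assms(1-3)] by (simp_all add: u_def pair_pos_def)
  then have "(u-1) * b + b \<le> NN k * b" by (metis Suc_diff_le diff_Suc_1 mult_Suc mult_le_mono1 add.commute)
  have "2 \<le> n" using assms by simp
  then have "2*k \<le> n*k" using mult_le_mono1 by blast
  have lens: "length (encoding_part n k s) = n*k" "length (back_part n k s) = NN k * b"
    using len by (simp_all add: encoding_part_def back_part_def LL_def b_def)
  have "hamming (block n k i j (r, v)) s = hamming (front_tag n k) (front_part n k s)
      + hamming (encode n k i j (r, v)) (encoding_part n k s) + hamming (back_tag n k u) (back_part n k s)"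
    using len assms(1-6) by (simp add: block_def u_def hamming_parts length_front_tag length_encode)
  moreover have "count_list (encoding_part n k s) True \<le> 2 + hamming (encode n k i j (r, v)) (encoding_part n k s)"
    using count_list_le_hamming[of "encode n k i j (r, v)" "encoding_part n k s" True] assms(1-6) lens
    by (simp add: length_encode count_encode)
  moreover have "b \<le> count_list (back_slot n k u s) True + hamming (back_tag n k u) (back_part n k s)"
  proof -
    have "length (back_slot n k u s) = b"
      using lens \<open>(u-1) * b + b \<le> NN k * b\<close> by (simp add: back_slot_def b_def)
    then have "b \<le> count_list (back_slot n k u s) True + hamming (back_slot n k u s) (ones b)"
      using count_list_le_hamming[of "back_slot n k u s" "ones b" True]
      by (simp add: ones_def count_list_replicate_same)
    moreover have "hamming (ones b) (back_slot n k u s) \<le> hamming (back_tag n k u) (back_part n k s)"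
      using hamming_slice_le[of b "(u-1) * b" "back_tag n k u" "back_part n k s"] back_tag_slot[of n k u]
      by (simp add: back_slot_def b_def)
    ultimately show ?thesis by (simp add: hamming_commute[of "ones b"])
  qed
  ultimately show ?thesis
    using close \<open>2*k \<le> n*k\<close> unfolding u_def b_def bb_def dd_def by linarith
qed

lemma count_back_slots_le:
  "1 \<le> u \<Longrightarrow> 1 \<le> v \<Longrightarrow> u \<noteq> v \<Longrightarrow>
    count_list (back_slot n k u s) True + count_list (back_slot n k v s) True \<le> count_list (back_part n k s) True"
  unfolding back_slot_def by (rule count_list_disjoint_slices_le) simp

lemma encoding_ones_le_back_slot:
  assumes edges: "\<forall>(r, v) \<in> set E. 1 \<le> r \<and> r < v \<and> v \<le> n"
    and "3 \<le> k" and ij: "1 \<le> i" "i < j" "j \<le> k" and len: "length s = LL n k"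
    and front: "hamming (front_tag n k) (front_part n k s) \<le> dd n k"
    and choice: "close_substring (choice_string n E k i j) (dd n k) s"
  shows "count_list (encoding_part n k s) True \<le> count_list (back_slot n k (pair_pos k i j) s) True + k"
proof -
  obtain r v where "(r, v) \<in> set E" "hamming (block n k i j (r, v)) s \<le> dd n k"
    using choice_window_is_block[OF assms] .
  moreover have "1 \<le> r" "r < v" "v \<le> n" using calculation(1) edges by auto
  ultimately show ?thesis using back_slot_count[OF ij] len by blast
qed

theorem lemma4:
  fixes n k :: nat and E :: "(nat \<times> nat) list" and s :: "bool list"
  assumes edges: "\<forall>(r, v) \<in> set E. 1 \<le> r \<and> r < v \<and> v \<le> n"
    and distinct_edges: "distinct E"
    and k3: "k \<ge> 3"
    and len: "length s = LL n k"
    and tmpl: "close_substring (template n k) (dd n k) s"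
    and choice: "\<forall>i j. 1 \<le> i \<and> i < j \<and> j \<le> k \<longrightarrow>
                   close_substring (choice_string n E k i j) (dd n k) s"
  shows "count_list (encoding_part n k s) True = k"
proof -
  have template: "hamming (front_tag n k) (front_part n k s) + count_list (encoding_part n k s) False
      + count_list (back_part n k s) True \<le> dd n k"
    using template_distance[OF len tmpl] .
  then have front: "hamming (front_tag n k) (front_part n k s) \<le> dd n k" by linarith
  have "E \<noteq> []"
    using choice[rule_format, of 1 2] k3 len NN_ge_3[OF k3]
    by (auto simp: close_substring_def choice_string_def LL_def bb_def)
  then have "k \<le> n*k" using edges by (cases E) auto
  have "pair_pos k 1 2 \<noteq> pair_pos k 1 3"
    using nth_pairs_pair_pos[of 1 2 k] nth_pairs_pair_pos[of 1 3 k] k3 by auto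
  then have "count_list (back_slot n k (pair_pos k 1 2) s) True + count_list (back_slot n k (pair_pos k 1 3) s) True
      \<le> count_list (back_part n k s) True"
    by (intro count_back_slots_le) (simp_all add: pair_pos_def)
  moreover have "count_list (encoding_part n k s) True + count_list (encoding_part n k s) False = n*k"
    using count_list_True_False[of "encoding_part n k s"] len by (simp add: encoding_part_def LL_def)
  moreover have "count_list (encoding_part n k s) True \<le> count_list (back_slot n k (pair_pos k 1 2) s) True + k"
    "count_list (encoding_part n k s) True \<le> count_list (back_slot n k (pair_pos k 1 3) s) True + k"
    using encoding_ones_le_back_slot[OF edges k3 _ _ _ len front] choice k3 by auto
  ultimately show ?thesis using template \<open>k \<le> n*k\<close> unfolding dd_def by linarith
qed

end
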